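(* Let $V$ be a vector space over a field $\mathbb{K}$ and $F$ a bilinear form on $V$, and let $\lambda_F\in\mathrm{End}(\mathcal{T}(V))$ be defined by $\lambda_F(u)=\Lambda_F(u)(1)$. Then: (i) $\lambda_F(1)=1$ and $\lambda_F(x)=x$ for $x\in V$; (ii) $\lambda_F(x\otimes u)=i_x^F(\lambda_F(u))+x\otimes\lambda_F(u)$ for $x\in V$, $u\in\mathcal{T}(V)$; (iii) $\lambda_F\circ i_f=i_f\circ\lambda_F$ for all $f\in V^*$; (iv) if $G$ is another bilinear form on $V$, then $\lambda_F\circ\lambda_G=\lambda_{F+G}$; (v) $\lambda_0=\mathrm{Id}_{\mathcal{T}(V)}$; (vi) $\lambda_F:\mathcal{T}(V)\to\mathcal{T}(V)$ is a bijection; (vii) $\lambda_F$ preserves parity: for $x_1,\dots,x_p\in V$, $\alpha(\lambda_F(x_1\otimes\cdots\otimes x_p))=(-1)^p\lambda_F(x_1\otimes\cdots\otimes x_p)$.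
   Context: $\mathcal{T}(V)$ is the tensor algebra of $V$ (product $\otimes$). $\alpha$ is the algebra automorphism of $\mathcal{T}(V)$ with $\alpha(x_1\otimes\cdots\otimes x_p)=(-1)^p x_1\otimes\cdots\otimes x_p$. For $x\in V$, $e_x(u)=x\otimes u$. For $f\in V^*$, $i_f$ is the unique linear map on $\mathcal{T}(V)$ with $i_f(1)=0$ and $i_f(x\otimes u)=f(x)u-x\otimes i_f(u)$ ($x\in V$). For a bilinear form $F$ and $x\in V$, $i_x^F:=i_{f_x}$ with $f_x(y)=F(x,y)$. $\Lambda_F:\mathcal{T}(V)\to\mathrm{End}(\mathcal{T}(V))$ is the unique unital algebra homomorphism with $\Lambda_F(x)=e_x+i_x^F$ for $x\in V$. *)

theory Defs
  imports Main "HOL-Library.Poly_Mapping"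
begin

(* Model: a K-vector space V with basis indexed by type 'b is the space of finitely
supported functions 'b \<Rightarrow>\<^sub>0 'k. Its tensor algebra T(V) is then the space of
finitely supported functions on words over the basis, 'b list \<Rightarrow>\<^sub>0 'k
(the basis of V^{\<otimes>p} being the words of length p). *)

type_synonym ('b, 'k) vec = "'b \<Rightarrow>\<^sub>0 'k"
type_synonym ('b, 'k) tens = "'b list \<Rightarrow>\<^sub>0 'k"

definition smul :: "'k::field \<Rightarrow> ('a \<Rightarrow>\<^sub>0 'k) \<Rightarrow> ('a \<Rightarrow>\<^sub>0 'k)" where
  "smul c u = Poly_Mapping.map (\<lambda>a. c * a) u"

definition tmult :: "('b, 'k::field) tens \<Rightarrow> ('b, 'k) tens \<Rightarrow> ('b, 'k) tens" where
  "tmult u v = (\<Sum>w1\<in>Poly_Mapping.keys u. \<Sum>w2\<in>Poly_Mapping.keys v.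
      Poly_Mapping.single (w1 @ w2) (Poly_Mapping.lookup u w1 * Poly_Mapping.lookup v w2))"

definition tone :: "('b, 'k::field) tens" where
  "tone = Poly_Mapping.single [] 1"

definition incl :: "('b, 'k::field) vec \<Rightarrow> ('b, 'k) tens" where
  "incl x = (\<Sum>b\<in>Poly_Mapping.keys x. Poly_Mapping.single [b] (Poly_Mapping.lookup x b))"

definition tword :: "('b, 'k::field) vec list \<Rightarrow> ('b, 'k) tens" where
  "tword xs = foldr (\<lambda>x u. tmult (incl x) u) xs tone"

definition lin_fun :: "(('b, 'k::field) vec \<Rightarrow> 'k) \<Rightarrow> bool" where
  "lin_fun f \<longleftrightarrow> (\<forall>x y. f (x + y) = f x + f y) \<and> (\<forall>c x. f (smul c x) = c * f x)"

definition bilin :: "(('b, 'k::field) vec \<Rightarrow> ('b, 'k) vec \<Rightarrow> 'k) \<Rightarrow> bool" where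
  "bilin F \<longleftrightarrow> (\<forall>y. lin_fun (\<lambda>x. F x y)) \<and> (\<forall>x. lin_fun (\<lambda>y. F x y))"

definition tlin :: "(('b, 'k::field) tens \<Rightarrow> ('b, 'k) tens) \<Rightarrow> bool" where
  "tlin g \<longleftrightarrow> (\<forall>u v. g (u + v) = g u + g v) \<and> (\<forall>c u. g (smul c u) = smul c (g u))"

definition ex :: "('b, 'k::field) vec \<Rightarrow> ('b, 'k) tens \<Rightarrow> ('b, 'k) tens" where
  "ex x u = tmult (incl x) u"

definition alpha :: "('b, 'k::field) tens \<Rightarrow> ('b, 'k) tens" where
  "alpha u = Abs_poly_mapping (\<lambda>w. (-1) ^ length w * Poly_Mapping.lookup u w)"

definition iop :: "(('b, 'k::field) vec \<Rightarrow> 'k) \<Rightarrow> ('b, 'k) tens \<Rightarrow> ('b, 'k) tens" where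
  "iop f = (THE g. tlin g \<and> g tone = 0 \<and>
      (\<forall>x u. g (ex x u) = smul (f x) u - ex x (g u)))"

definition iF :: "(('b, 'k::field) vec \<Rightarrow> ('b, 'k) vec \<Rightarrow> 'k) \<Rightarrow> ('b, 'k) vec
    \<Rightarrow> ('b, 'k) tens \<Rightarrow> ('b, 'k) tens" where
  "iF F x = iop (\<lambda>y. F x y)"

definition LamF :: "(('b, 'k::field) vec \<Rightarrow> ('b, 'k) vec \<Rightarrow> 'k)
    \<Rightarrow> ('b, 'k) tens \<Rightarrow> ('b, 'k) tens \<Rightarrow> ('b, 'k) tens" where
  "LamF F = (THE \<Phi>. (\<forall>u. tlin (\<Phi> u)) \<and>
      (\<forall>u v. \<Phi> (u + v) = (\<lambda>w. \<Phi> u w + \<Phi> v w)) \<and>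
      (\<forall>c u. \<Phi> (smul c u) = (\<lambda>w. smul c (\<Phi> u w))) \<and>
      \<Phi> tone = id \<and>
      (\<forall>u v. \<Phi> (tmult u v) = \<Phi> u \<circ> \<Phi> v) \<and>
      (\<forall>x. \<Phi> (incl x) = (\<lambda>w. ex x w + iF F x w)))"

definition lamF :: "(('b, 'k::field) vec \<Rightarrow> ('b, 'k) vec \<Rightarrow> 'k)
    \<Rightarrow> ('b, 'k) tens \<Rightarrow> ('b, 'k) tens" where
  "lamF F u = LamF F u tone"

end

theory Submission
  imports Defs
begin

(* Lambda_F is constructed explicitly: a basis word b_1 ... b_p acts as the composite of the
  operators e_{b_i} + i_{b_i}^F, and the linear extension of this action is a unital algebra
  homomorphism sending x to e_x + i_x^F, hence it is Lambda_F.  This gives the recursion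
  lambda_F(x \<otimes> u) = x \<otimes> lambda_F(u) + i_x^F(lambda_F(u)).  Every other identity compares
  linear maps on T(V), so it suffices to check it on basis words, by induction on their length;
  the recursion, the anticommutation i_f i_g = - i_g i_f of contractions and the fact that alpha
  anticommutes with every e_x and i_f do all the work.  Finally lambda_{-F} is inverse to
  lambda_F by (iv) and (v). *)

lemma lookup_smul [simp]: "Poly_Mapping.lookup (smul c u) w = c * Poly_Mapping.lookup u w"
  by (simp add: smul_def map.rep_eq when_def)

lemma smul_add_left: "smul (a + b) u = smul a u + smul b u"
  by (rule poly_mapping_eqI) (simp add: lookup_add algebra_simps)

lemma smul_add_right: "smul c (u + v) = smul c u + smul c v"
  by (rule poly_mapping_eqI) (simp add: lookup_add algebra_simps)

lemma smul_diff_right: "smul c (u - v) = smul c u - smul c v"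
  by (rule poly_mapping_eqI) (simp add: lookup_minus algebra_simps)

lemma smul_minus_left: "smul (- c) u = - smul c u"
  by (rule poly_mapping_eqI) simp

lemma smul_minus_right: "smul c (- u) = - smul c u"
  by (rule poly_mapping_eqI) simp

lemma smul_smul [simp]: "smul a (smul b u) = smul (a * b) u"
  by (rule poly_mapping_eqI) (simp add: algebra_simps)

lemma smul_one [simp]: "smul 1 u = u"
  by (rule poly_mapping_eqI) simp

lemma smul_zero_left [simp]: "smul 0 u = 0"
  by (rule poly_mapping_eqI) simp

lemma smul_zero_right [simp]: "smul c 0 = 0"
  by (rule poly_mapping_eqI) simp

lemma smul_single: "smul c (Poly_Mapping.single w a) = Poly_Mapping.single w (c * a)"
  by (rule poly_mapping_eqI) (simp add: lookup_single when_def)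

lemma single_eq_smul: "Poly_Mapping.single w c = smul c (Poly_Mapping.single w (1::'k::field))"
  by (simp add: smul_single)

lemma smul_sum_left: "smul (\<Sum>i\<in>A. f i) u = (\<Sum>i\<in>A. smul (f i) u)"
  by (induction A rule: infinite_finite_induct) (auto simp: smul_add_left)

lemma smul_sum_right: "smul c (\<Sum>i\<in>A. f i) = (\<Sum>i\<in>A. smul c (f i))"
  by (induction A rule: infinite_finite_induct) (auto simp: smul_add_right)

lemma keys_smul: "Poly_Mapping.keys (smul c u) \<subseteq> Poly_Mapping.keys u"
  by (auto simp: in_keys_iff)

lemma poly_mapping_expansion:
  "u = (\<Sum>w\<in>Poly_Mapping.keys u. Poly_Mapping.single w (Poly_Mapping.lookup u w))"
  by (rule poly_mapping_eqI) (auto simp: lookup_sum lookup_single when_def in_keys_iff)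

lemma poly_mapping_induct [case_names zero add single]:
  fixes P :: "('a \<Rightarrow>\<^sub>0 'b::comm_monoid_add) \<Rightarrow> bool"
  assumes "P 0" "\<And>u v. P u \<Longrightarrow> P v \<Longrightarrow> P (u + v)" "\<And>w c. P (Poly_Mapping.single w c)"
  shows "P u"
proof -
  have "P (\<Sum>w\<in>A. Poly_Mapping.single w (Poly_Mapping.lookup u w))" if "finite A" for A
    using that by (induction A rule: finite_induct) (auto simp: assms)
  then show ?thesis
    by (subst poly_mapping_expansion) simp
qed

section \<open>The tensor product\<close>

lemma tmult_eq_sum_superset:
  assumes "finite A" "Poly_Mapping.keys u \<subseteq> A" "finite B" "Poly_Mapping.keys v \<subseteq> B"
  shows "tmult u v = (\<Sum>w1\<in>A. \<Sum>w2\<in>B.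
      Poly_Mapping.single (w1 @ w2) (Poly_Mapping.lookup u w1 * Poly_Mapping.lookup v w2))"
proof -
  have "tmult u v = (\<Sum>w1\<in>A. \<Sum>w2\<in>Poly_Mapping.keys v.
      Poly_Mapping.single (w1 @ w2) (Poly_Mapping.lookup u w1 * Poly_Mapping.lookup v w2))"
    unfolding tmult_def
    by (rule sum.mono_neutral_left) (use assms in \<open>auto simp: in_keys_iff\<close>)
  also have "\<dots> = (\<Sum>w1\<in>A. \<Sum>w2\<in>B.
      Poly_Mapping.single (w1 @ w2) (Poly_Mapping.lookup u w1 * Poly_Mapping.lookup v w2))"
    by (rule sum.cong[OF refl], rule sum.mono_neutral_left) (use assms in \<open>auto simp: in_keys_iff\<close>)
  finally show ?thesis .
qed

lemma tmult_add_left: "tmult (u + v) t = tmult u t + tmult v t"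
proof -
  let ?A = "Poly_Mapping.keys u \<union> Poly_Mapping.keys v" and ?B = "Poly_Mapping.keys t"
  let ?S = "\<lambda>s. \<Sum>w1\<in>?A. \<Sum>w2\<in>?B.
      Poly_Mapping.single (w1 @ w2) (Poly_Mapping.lookup s w1 * Poly_Mapping.lookup t w2)"
  have "tmult (u + v) t = ?S (u + v)"
    by (rule tmult_eq_sum_superset) (auto dest: subsetD[OF keys_add])
  moreover have "tmult u t = ?S u" and "tmult v t = ?S v"
    by (rule tmult_eq_sum_superset; auto)+
  ultimately show ?thesis
    by (simp add: lookup_add distrib_right single_add sum.distrib)
qed

lemma tmult_add_right: "tmult t (u + v) = tmult t u + tmult t v"
proof -
  let ?A = "Poly_Mapping.keys t" and ?B = "Poly_Mapping.keys u \<union> Poly_Mapping.keys v"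
  let ?S = "\<lambda>s. \<Sum>w1\<in>?A. \<Sum>w2\<in>?B.
      Poly_Mapping.single (w1 @ w2) (Poly_Mapping.lookup t w1 * Poly_Mapping.lookup s w2)"
  have "tmult t (u + v) = ?S (u + v)"
    by (rule tmult_eq_sum_superset) (auto dest: subsetD[OF keys_add])
  moreover have "tmult t u = ?S u" and "tmult t v = ?S v"
    by (rule tmult_eq_sum_superset; auto)+
  ultimately show ?thesis
    by (simp add: lookup_add distrib_left single_add sum.distrib)
qed

lemma tmult_smul_left: "tmult (smul c u) v = smul c (tmult u v)"
proof -
  have "tmult (smul c u) v = (\<Sum>w1\<in>Poly_Mapping.keys u. \<Sum>w2\<in>Poly_Mapping.keys v.
      Poly_Mapping.single (w1 @ w2) (Poly_Mapping.lookup (smul c u) w1 * Poly_Mapping.lookup v w2))"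
    by (rule tmult_eq_sum_superset) (auto dest: subsetD[OF keys_smul])
  then show ?thesis
    by (simp add: tmult_def smul_sum_right smul_single mult.assoc)
qed

lemma tmult_smul_right: "tmult u (smul c v) = smul c (tmult u v)"
proof -
  have "tmult u (smul c v) = (\<Sum>w1\<in>Poly_Mapping.keys u. \<Sum>w2\<in>Poly_Mapping.keys v.
      Poly_Mapping.single (w1 @ w2) (Poly_Mapping.lookup u w1 * Poly_Mapping.lookup (smul c v) w2))"
    by (rule tmult_eq_sum_superset) (auto dest: subsetD[OF keys_smul])
  then show ?thesis
    by (simp add: tmult_def smul_sum_right smul_single mult.left_commute)
qed

lemma tmult_single:
  "tmult (Poly_Mapping.single w1 a) (Poly_Mapping.single w2 b) = Poly_Mapping.single (w1 @ w2) (a * b)"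
  by (subst tmult_eq_sum_superset[where A="{w1}" and B="{w2}"]) auto

lemma tmult_zero_left [simp]: "tmult 0 v = 0"
  by (simp add: tmult_def)

lemma tmult_zero_right [simp]: "tmult v 0 = 0"
  by (simp add: tmult_def)

lemma tmult_sum_left: "tmult (\<Sum>i\<in>A. f i) v = (\<Sum>i\<in>A. tmult (f i) v)"
  by (induction A rule: infinite_finite_induct) (auto simp: tmult_add_left)

lemma tmult_sum_right: "tmult v (\<Sum>i\<in>A. f i) = (\<Sum>i\<in>A. tmult v (f i))"
  by (induction A rule: infinite_finite_induct) (auto simp: tmult_add_right)

lemma tmult_tone_right [simp]: "tmult u tone = u"
  unfolding tone_def
  by (subst tmult_eq_sum_superset[where A="Poly_Mapping.keys u" and B="{[]}"])
    (auto simp flip: poly_mapping_expansion)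

lemma incl_eq_sum:
  "incl x = (\<Sum>b\<in>Poly_Mapping.keys x. smul (Poly_Mapping.lookup x b) (Poly_Mapping.single [b] 1))"
  unfolding incl_def by (simp add: smul_single)

lemma incl_single [simp]: "incl (Poly_Mapping.single b 1) = Poly_Mapping.single [b] (1::'k::field)"
  unfolding incl_def by simp

lemma ex_single_single:
  "ex (Poly_Mapping.single b 1) (Poly_Mapping.single w c) = Poly_Mapping.single (b # w) c"
  by (simp add: ex_def tmult_single)

lemma ex_eq_sum:
  "ex x u = (\<Sum>b\<in>Poly_Mapping.keys x. smul (Poly_Mapping.lookup x b) (ex (Poly_Mapping.single b 1) u))"
  unfolding ex_def incl_eq_sum by (simp add: tmult_sum_left tmult_smul_left)

lemma ex_add: "ex x (u + v) = ex x u + ex x v"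
  by (simp add: ex_def tmult_add_right)

lemma ex_smul: "ex x (smul c u) = smul c (ex x u)"
  by (simp add: ex_def tmult_smul_right)

lemma ex_zero [simp]: "ex x 0 = 0"
  by (simp add: ex_def)

lemma ex_sum: "ex x (\<Sum>i\<in>A. f i) = (\<Sum>i\<in>A. ex x (f i))"
  by (simp add: ex_def tmult_sum_right)

lemma ex_diff: "ex x (u - v) = ex x u - ex x v"
  by (metis add_diff_cancel diff_add_cancel ex_add)

lemma ex_minus: "ex x (- u) = - ex x u"
  using ex_diff[of x 0 u] by simp

lemma tword_Nil: "tword [] = tone"
  by (simp add: tword_def)

lemma tword_Cons: "tword (x # xs) = ex x (tword xs)"
  by (simp add: tword_def ex_def)

lemma tlin_add: "tlin g \<Longrightarrow> g (u + v) = g u + g v"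
  unfolding tlin_def by blast

lemma tlin_smul: "tlin g \<Longrightarrow> g (smul c u) = smul c (g u)"
  unfolding tlin_def by blast

lemma tlin_zero: "tlin g \<Longrightarrow> g 0 = 0"
  using tlin_smul[of g 0 0] by simp

lemma tlin_diff: "tlin g \<Longrightarrow> g (u - v) = g u - g v"
  by (metis add_diff_cancel diff_add_cancel tlin_add)

lemma tlin_sum: "tlin g \<Longrightarrow> g (\<Sum>i\<in>A. f i) = (\<Sum>i\<in>A. g (f i))"
  by (induction A rule: infinite_finite_induct) (auto simp: tlin_zero tlin_add)

lemma tlin_id: "tlin id"
  by (simp add: tlin_def)

lemma tlin_comp: "tlin g \<Longrightarrow> tlin h \<Longrightarrow> tlin (\<lambda>u. g (h u))"
  by (simp add: tlin_def)

lemma tlin_minus: "tlin g \<Longrightarrow> tlin (\<lambda>u. - g u)"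
  by (simp add: tlin_def smul_minus_right)

lemma tlin_eqI:
  fixes g h :: "('b, 'k::field) tens \<Rightarrow> ('b, 'k) tens"
  assumes "tlin g" "tlin h" "\<And>w. g (Poly_Mapping.single w 1) = h (Poly_Mapping.single w 1)"
  shows "g = h"
proof
  fix u
  show "g u = h u"
  proof (induction u rule: poly_mapping_induct)
    case (single w c)
    then show ?case
      using assms by (simp add: single_eq_smul[of w c] tlin_smul)
  qed (use assms in \<open>simp_all add: tlin_zero tlin_add\<close>)
qed

lemma tlin_eqI_word_induct:
  fixes g h :: "('b, 'k::field) tens \<Rightarrow> ('b, 'k) tens"
  assumes "tlin g" "tlin h" "g tone = h tone"
    and "\<And>b w. g (Poly_Mapping.single w 1) = h (Poly_Mapping.single w 1) \<Longrightarrow>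
      g (ex (Poly_Mapping.single b 1) (Poly_Mapping.single w 1))
        = h (ex (Poly_Mapping.single b 1) (Poly_Mapping.single w 1))"
  shows "g = h"
proof (rule tlin_eqI[OF assms(1,2)])
  fix w
  show "g (Poly_Mapping.single w 1) = h (Poly_Mapping.single w 1)"
    by (induction w) (use assms in \<open>auto simp: tone_def ex_single_single[symmetric]\<close>)
qed

definition lin_ext :: "('a \<Rightarrow> ('c \<Rightarrow>\<^sub>0 'k::field)) \<Rightarrow> ('a \<Rightarrow>\<^sub>0 'k) \<Rightarrow> ('c \<Rightarrow>\<^sub>0 'k)" where
  "lin_ext \<phi> u = (\<Sum>w\<in>Poly_Mapping.keys u. smul (Poly_Mapping.lookup u w) (\<phi> w))"

lemma lin_ext_superset:
  "finite A \<Longrightarrow> Poly_Mapping.keys u \<subseteq> A \<Longrightarrow>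
    lin_ext \<phi> u = (\<Sum>w\<in>A. smul (Poly_Mapping.lookup u w) (\<phi> w))"
  unfolding lin_ext_def by (rule sum.mono_neutral_left) (auto simp: in_keys_iff)

lemma lin_ext_add: "lin_ext \<phi> (u + v) = lin_ext \<phi> u + lin_ext \<phi> v"
proof -
  let ?A = "Poly_Mapping.keys u \<union> Poly_Mapping.keys v"
  have "lin_ext \<phi> (u + v) = (\<Sum>w\<in>?A. smul (Poly_Mapping.lookup (u + v) w) (\<phi> w))"
    by (rule lin_ext_superset) (auto dest: subsetD[OF keys_add])
  moreover have "lin_ext \<phi> u = (\<Sum>w\<in>?A. smul (Poly_Mapping.lookup u w) (\<phi> w))"
    and "lin_ext \<phi> v = (\<Sum>w\<in>?A. smul (Poly_Mapping.lookup v w) (\<phi> w))"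
    by (rule lin_ext_superset; auto)+
  ultimately show ?thesis
    by (simp add: lookup_add smul_add_left sum.distrib)
qed

lemma lin_ext_smul: "lin_ext \<phi> (smul c u) = smul c (lin_ext \<phi> u)"
proof -
  have "lin_ext \<phi> (smul c u)
      = (\<Sum>w\<in>Poly_Mapping.keys u. smul (Poly_Mapping.lookup (smul c u) w) (\<phi> w))"
    by (rule lin_ext_superset) (auto dest: subsetD[OF keys_smul])
  then show ?thesis
    by (simp add: lin_ext_def smul_sum_right)
qed

lemma lin_ext_single [simp]: "lin_ext \<phi> (Poly_Mapping.single w c) = smul c (\<phi> w)"
  by (subst lin_ext_superset[where A="{w}"]) auto

lemma lin_ext_zero [simp]: "lin_ext \<phi> 0 = 0"
  by (simp add: lin_ext_def)

lemma tlin_lin_ext: "tlin (lin_ext \<phi>)"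
  by (simp add: tlin_def lin_ext_add lin_ext_smul)

lemma lin_fun_zero: "lin_fun f \<Longrightarrow> f 0 = 0"
  unfolding lin_fun_def by (metis add_cancel_right_right add_0)

lemma lin_fun_sum: "lin_fun f \<Longrightarrow> f (\<Sum>i\<in>A. g i) = (\<Sum>i\<in>A. f (g i))"
  by (induction A rule: infinite_finite_induct) (auto simp: lin_fun_zero lin_fun_def)

lemma lin_fun_expansion:
  assumes "lin_fun f"
  shows "f x = (\<Sum>b\<in>Poly_Mapping.keys x. Poly_Mapping.lookup x b * f (Poly_Mapping.single b 1))"
proof -
  have "f x = f (\<Sum>b\<in>Poly_Mapping.keys x. smul (Poly_Mapping.lookup x b) (Poly_Mapping.single b 1))"
    by (subst poly_mapping_expansion) (simp add: smul_single)
  then show ?thesis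
    using assms by (simp add: lin_fun_sum) (simp add: lin_fun_def)
qed

lemma bilin_lin_fun_left: "bilin F \<Longrightarrow> lin_fun (\<lambda>x. F x y)"
  by (simp add: bilin_def)

lemma bilin_lin_fun_right: "bilin F \<Longrightarrow> lin_fun (F x)"
  by (simp add: bilin_def)

lemma bilin_expansion:
  "bilin F \<Longrightarrow> F x = (\<lambda>y. \<Sum>b\<in>Poly_Mapping.keys x. Poly_Mapping.lookup x b * F (Poly_Mapping.single b 1) y)"
  by (auto dest: bilin_lin_fun_left lin_fun_expansion)

lemma bilin_zero: "bilin (\<lambda>x y. 0)"
  unfolding bilin_def lin_fun_def by simp

lemma bilin_add: "bilin F \<Longrightarrow> bilin G \<Longrightarrow> bilin (\<lambda>x y. F x y + G x y)"
  unfolding bilin_def lin_fun_def by (simp add: algebra_simps)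

lemma bilin_minus: "bilin F \<Longrightarrow> bilin (\<lambda>x y. - F x y)"
  unfolding bilin_def lin_fun_def by simp

section \<open>Contractions\<close>

fun contraction_word :: "(('b, 'k::field) vec \<Rightarrow> 'k) \<Rightarrow> 'b list \<Rightarrow> ('b, 'k) tens" where
  "contraction_word f [] = 0"
| "contraction_word f (b # w) = smul (f (Poly_Mapping.single b 1)) (Poly_Mapping.single w 1)
     - ex (Poly_Mapping.single b 1) (contraction_word f w)"

definition contraction :: "(('b, 'k::field) vec \<Rightarrow> 'k) \<Rightarrow> ('b, 'k) tens \<Rightarrow> ('b, 'k) tens" where
  "contraction f = lin_ext (contraction_word f)"

lemma tlin_contraction: "tlin (contraction f)"
  by (simp add: contraction_def tlin_lin_ext)

lemma contraction_add: "contraction f (u + v) = contraction f u + contraction f v"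
  by (simp add: contraction_def lin_ext_add)

lemma contraction_smul: "contraction f (smul c u) = smul c (contraction f u)"
  by (simp add: contraction_def lin_ext_smul)

lemma contraction_zero [simp]: "contraction f 0 = 0"
  by (simp add: contraction_def)

lemma contraction_diff: "contraction f (u - v) = contraction f u - contraction f v"
  by (rule tlin_diff[OF tlin_contraction])

lemma contraction_minus: "contraction f (- u) = - contraction f u"
  using contraction_diff[of f 0 u] by simp

lemma contraction_sum: "contraction f (\<Sum>i\<in>A. g i) = (\<Sum>i\<in>A. contraction f (g i))"
  by (rule tlin_sum[OF tlin_contraction])

lemma contraction_tone [simp]: "contraction f tone = 0"
  by (simp add: contraction_def tone_def)

lemma contraction_ex_single:
  "contraction f (ex (Poly_Mapping.single b 1) u)
    = smul (f (Poly_Mapping.single b 1)) u - ex (Poly_Mapping.single b 1) (contraction f u)"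
proof (induction u rule: poly_mapping_induct)
  case zero
  then show ?case by simp
next
  case (add u v)
  then show ?case by (simp add: ex_add contraction_add smul_add_right)
next
  case (single w c)
  show ?case
    by (simp add: ex_single_single contraction_def smul_diff_right ex_smul)
      (simp add: single_eq_smul[of w c] mult.commute)
qed

lemma contraction_ex:
  assumes "lin_fun f"
  shows "contraction f (ex x u) = smul (f x) u - ex x (contraction f u)"
proof -
  have "contraction f (ex x u) = (\<Sum>b\<in>Poly_Mapping.keys x. smul (Poly_Mapping.lookup x b)
      (smul (f (Poly_Mapping.single b 1)) u - ex (Poly_Mapping.single b 1) (contraction f u)))"
    by (simp add: ex_eq_sum[of x u] contraction_sum contraction_smul contraction_ex_single)
  also have "\<dots> = smul (\<Sum>b\<in>Poly_Mapping.keys x.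
      Poly_Mapping.lookup x b * f (Poly_Mapping.single b 1)) u - ex x (contraction f u)"
    by (simp add: ex_eq_sum[of x "contraction f u"] smul_sum_left smul_diff_right sum_subtractf)
  finally show ?thesis
    using lin_fun_expansion[OF assms, of x] by simp
qed

lemma contraction_unique:
  assumes "lin_fun f" "tlin g" "g tone = 0" "\<And>x u. g (ex x u) = smul (f x) u - ex x (g u)"
  shows "g = contraction f"
  by (rule tlin_eqI_word_induct) (use assms in \<open>simp_all add: tlin_contraction contraction_ex\<close>)

lemma iop_eq_contraction: "lin_fun f \<Longrightarrow> iop f = contraction f"
  unfolding iop_def
  by (rule the_equality) (auto simp: tlin_contraction contraction_ex intro: contraction_unique)

lemma iF_eq_contraction: "bilin F \<Longrightarrow> iF F x = contraction (F x)"
  by (simp add: iF_def iop_eq_contraction bilin_lin_fun_right)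

lemma contraction_word_add_fun:
  "contraction_word (\<lambda>y. f y + g y) w = contraction_word f w + contraction_word g w"
  by (induction w) (auto simp: smul_add_left ex_add algebra_simps)

lemma contraction_add_fun:
  "contraction (\<lambda>y. f y + g y) u = contraction f u + contraction g u"
  unfolding contraction_def lin_ext_def
  by (simp add: contraction_word_add_fun smul_add_right sum.distrib)

lemma contraction_zero_fun: "contraction (\<lambda>y. 0) u = (0 :: ('b, 'k::field) tens)"
proof -
  have "contraction_word (\<lambda>y. 0) w = (0 :: ('b, 'k) tens)" for w
    by (induction w) auto
  then show ?thesis
    by (simp add: contraction_def lin_ext_def)
qed

lemma contraction_sum_scale_fun:
  fixes f :: "'i \<Rightarrow> ('b, 'k::field) vec \<Rightarrow> 'k"
  shows "contraction (\<lambda>y. \<Sum>i\<in>A. c i * f i y) u = (\<Sum>i\<in>A. smul (c i) (contraction (f i) u))"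
proof -
  have "contraction_word (\<lambda>y. \<Sum>i\<in>A. c i * f i y) w = (\<Sum>i\<in>A. smul (c i) (contraction_word (f i) w))"
    for w :: "'b list"
    by (induction w)
      (simp_all add: smul_sum_left ex_sum sum_subtractf smul_diff_right ex_smul mult.commute)
  then show ?thesis
    unfolding contraction_def lin_ext_def
    by (simp add: smul_sum_right mult.commute sum.swap[of _ A])
qed

lemma contraction_bilin_expansion:
  assumes "bilin F"
  shows "contraction (F x) u = (\<Sum>b\<in>Poly_Mapping.keys x.
      smul (Poly_Mapping.lookup x b) (contraction (F (Poly_Mapping.single b 1)) u))"
  by (subst bilin_expansion[OF assms]) (rule contraction_sum_scale_fun)

lemma contraction_anticommute:
  fixes f g :: "('b, 'k::field) vec \<Rightarrow> 'k"
  assumes f: "lin_fun f" and g: "lin_fun g"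
  shows "contraction f (contraction g u) = - contraction g (contraction f u)"
proof -
  have "(\<lambda>u. contraction f (contraction g u)) = (\<lambda>u. - contraction g (contraction f u))"
  proof (rule tlin_eqI_word_induct)
    show "tlin (\<lambda>u. contraction f (contraction g u))"
      by (rule tlin_comp[OF tlin_contraction tlin_contraction])
    show "tlin (\<lambda>u. - contraction g (contraction f u))"
      by (rule tlin_minus[OF tlin_comp[OF tlin_contraction tlin_contraction]])
  next
    fix b :: 'b and w :: "'b list"
    let ?x = "Poly_Mapping.single b (1::'k)" and ?s = "Poly_Mapping.single w (1::'k)"
    assume IH: "contraction f (contraction g ?s) = - contraction g (contraction f ?s)"
    have fg: "contraction f (contraction g (ex ?x ?s)) = smul (g ?x) (contraction f ?s)
        - (smul (f ?x) (contraction g ?s) - ex ?x (contraction f (contraction g ?s)))"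
      by (simp only: contraction_ex f g contraction_diff contraction_smul)
    have gf: "contraction g (contraction f (ex ?x ?s)) = smul (f ?x) (contraction g ?s)
        - (smul (g ?x) (contraction f ?s) - ex ?x (contraction g (contraction f ?s)))"
      by (simp only: contraction_ex f g contraction_diff contraction_smul)
    show "contraction f (contraction g (ex ?x ?s)) = - contraction g (contraction f (ex ?x ?s))"
      unfolding fg gf IH ex_minus by (simp add: algebra_simps)
  qed simp
  then show ?thesis
    by (rule fun_cong)
qed

section \<open>Construction of Lambda_F\<close>

fun Lambda_word :: "(('b, 'k::field) vec \<Rightarrow> ('b, 'k) vec \<Rightarrow> 'k) \<Rightarrow> 'b list
    \<Rightarrow> ('b, 'k) tens \<Rightarrow> ('b, 'k) tens" where
  "Lambda_word F [] v = v"
| "Lambda_word F (b # w) v = ex (Poly_Mapping.single b 1) (Lambda_word F w v)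
     + contraction (F (Poly_Mapping.single b 1)) (Lambda_word F w v)"

definition Lambda :: "(('b, 'k::field) vec \<Rightarrow> ('b, 'k) vec \<Rightarrow> 'k)
    \<Rightarrow> ('b, 'k) tens \<Rightarrow> ('b, 'k) tens \<Rightarrow> ('b, 'k) tens" where
  "Lambda F u v = lin_ext (\<lambda>w. Lambda_word F w v) u"

lemma tlin_Lambda_word: "tlin (Lambda_word F w)"
proof (induction w)
  case Nil
  then show ?case by (simp add: tlin_def)
next
  case (Cons b w)
  then show ?case
    by (simp add: tlin_def ex_add ex_smul contraction_add contraction_smul smul_add_right)
qed

lemma Lambda_word_append: "Lambda_word F (w1 @ w2) v = Lambda_word F w1 (Lambda_word F w2 v)"
  by (induction w1) auto

lemma tlin_Lambda: "tlin (Lambda F u)"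
  unfolding tlin_def Lambda_def lin_ext_def
  by (simp add: tlin_add[OF tlin_Lambda_word] tlin_smul[OF tlin_Lambda_word] smul_add_right
      sum.distrib smul_sum_right mult.commute)

lemma Lambda_add: "Lambda F (u + v) = (\<lambda>w. Lambda F u w + Lambda F v w)"
  by (simp add: fun_eq_iff Lambda_def lin_ext_add)

lemma Lambda_smul: "Lambda F (smul c u) = (\<lambda>w. smul c (Lambda F u w))"
  by (simp add: fun_eq_iff Lambda_def lin_ext_smul)

lemma Lambda_tone: "Lambda F tone = id"
  by (simp add: fun_eq_iff Lambda_def tone_def)

lemma Lambda_tmult: "Lambda F (tmult u v) = Lambda F u \<circ> Lambda F v"
proof
  fix t
  show "Lambda F (tmult u v) t = (Lambda F u \<circ> Lambda F v) t"
  proof (induction u rule: poly_mapping_induct)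
    case zero
    then show ?case by (simp add: Lambda_def)
  next
    case (add u1 u2)
    then show ?case by (simp add: tmult_add_left Lambda_add)
  next
    case (single w1 a)
    show ?case
    proof (induction v rule: poly_mapping_induct)
      case zero
      then show ?case by (simp add: Lambda_def tlin_zero[OF tlin_Lambda_word])
    next
      case (add v1 v2)
      then show ?case by (simp add: tmult_add_right Lambda_add tlin_add[OF tlin_Lambda])
    next
      case (single w2 b)
      then show ?case
        by (simp add: tmult_single Lambda_def Lambda_word_append tlin_smul[OF tlin_Lambda_word])
    qed
  qed
qed

lemma Lambda_incl:
  assumes "bilin F"
  shows "Lambda F (incl x) = (\<lambda>w. ex x w + iF F x w)"
proof
  fix v
  have "Lambda F (incl x) v = (\<Sum>b\<in>Poly_Mapping.keys x. smul (Poly_Mapping.lookup x b)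
      (ex (Poly_Mapping.single b 1) v + contraction (F (Poly_Mapping.single b 1)) v))"
    by (simp add: Lambda_def incl_eq_sum tlin_sum[OF tlin_lin_ext] lin_ext_smul)
  also have "\<dots> = ex x v + contraction (F x) v"
    by (simp add: smul_add_right sum.distrib contraction_bilin_expansion[OF assms, of x v]
        ex_eq_sum[of x v])
  finally show "Lambda F (incl x) v = ex x v + iF F x v"
    by (simp add: iF_eq_contraction assms)
qed

text \<open>T(V) is generated by V as an algebra.\<close>

lemma tensor_hom_eqI:
  fixes \<Phi> \<Psi> :: "('b, 'k::field) tens \<Rightarrow> ('b, 'k) tens \<Rightarrow> ('b, 'k) tens"
  assumes hom_add: "\<And>u v. \<Phi> (u + v) = (\<lambda>w. \<Phi> u w + \<Phi> v w)" "\<And>u v. \<Psi> (u + v) = (\<lambda>w. \<Psi> u w + \<Psi> v w)"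
    and hom_smul: "\<And>c u. \<Phi> (smul c u) = (\<lambda>w. smul c (\<Phi> u w))" "\<And>c u. \<Psi> (smul c u) = (\<lambda>w. smul c (\<Psi> u w))"
    and hom_one: "\<Phi> tone = id" "\<Psi> tone = id"
    and hom_mult: "\<And>u v. \<Phi> (tmult u v) = \<Phi> u \<circ> \<Phi> v" "\<And>u v. \<Psi> (tmult u v) = \<Psi> u \<circ> \<Psi> v"
    and gen: "\<And>x. \<Phi> (incl x) = \<Psi> (incl x)"
  shows "\<Phi> = \<Psi>"
proof
  have words: "\<Phi> (Poly_Mapping.single w 1) = \<Psi> (Poly_Mapping.single w 1)" for w
  proof (induction w)
    case Nil
    then show ?case using hom_one by (simp add: tone_def)
  next
    case (Cons b w)
    have "Poly_Mapping.single (b # w) 1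
        = tmult (incl (Poly_Mapping.single b 1)) (Poly_Mapping.single w (1::'k))"
      by (simp add: tmult_single)
    then show ?case
      by (simp only: hom_mult gen Cons)
  qed
  fix u
  show "\<Phi> u = \<Psi> u"
  proof (induction u rule: poly_mapping_induct)
    case zero
    then show ?case using hom_smul[of 0 tone] by simp
  next
    case (add u v)
    then show ?case by (simp add: hom_add)
  next
    case (single w c)
    then show ?case by (simp add: single_eq_smul[of w c] hom_smul words)
  qed
qed

lemma LamF_eq_Lambda:
  assumes "bilin F"
  shows "LamF F = Lambda F"
  unfolding LamF_def
proof (rule the_equality, goal_cases)
  case 1
  show ?case
    by (simp add: tlin_Lambda Lambda_add Lambda_smul Lambda_tone Lambda_tmult Lambda_incl assms)
next
  case (2 \<Phi>)
  then show ?case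
    by (elim conjE, intro tensor_hom_eqI)
      (simp_all add: Lambda_add Lambda_smul Lambda_tone Lambda_tmult Lambda_incl assms)
qed

lemma lamF_eq_Lambda: "bilin F \<Longrightarrow> lamF F u = Lambda F u tone"
  by (simp add: lamF_def LamF_eq_Lambda)

lemma tlin_lamF: "bilin F \<Longrightarrow> tlin (lamF F)"
  by (simp add: tlin_def lamF_eq_Lambda Lambda_add Lambda_smul)

lemma lamF_tone: "bilin F \<Longrightarrow> lamF F tone = tone"
  by (simp add: lamF_eq_Lambda Lambda_tone)

lemma lamF_incl: "bilin F \<Longrightarrow> lamF F (incl x) = incl x"
  by (simp add: lamF_eq_Lambda Lambda_incl ex_def iF_eq_contraction)

lemma lamF_ex: "bilin F \<Longrightarrow> lamF F (ex x u) = iF F x (lamF F u) + ex x (lamF F u)"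
  by (simp add: lamF_eq_Lambda ex_def Lambda_tmult Lambda_incl add.commute)

lemma lamF_ex_contraction:
  "bilin F \<Longrightarrow> lamF F (ex x u) = contraction (F x) (lamF F u) + ex x (lamF F u)"
  by (simp add: lamF_ex iF_eq_contraction)

lemma lamF_contraction_commute:
  fixes F :: "('b, 'k::field) vec \<Rightarrow> ('b, 'k) vec \<Rightarrow> 'k"
  assumes F: "bilin F" and f: "lin_fun f"
  shows "lamF F (contraction f u) = contraction f (lamF F u)"
proof -
  have "(\<lambda>u. lamF F (contraction f u)) = (\<lambda>u. contraction f (lamF F u))"
  proof (rule tlin_eqI_word_induct)
    show "tlin (\<lambda>u. lamF F (contraction f u))"
      by (rule tlin_comp[OF tlin_lamF[OF F] tlin_contraction])
    show "tlin (\<lambda>u. contraction f (lamF F u))"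
      by (rule tlin_comp[OF tlin_contraction tlin_lamF[OF F]])
    show "lamF F (contraction f tone) = contraction f (lamF F tone)"
      by (simp add: lamF_tone F tlin_zero[OF tlin_lamF[OF F]])
  next
    fix b :: 'b and w :: "'b list"
    let ?x = "Poly_Mapping.single b (1::'k)" and ?s = "Poly_Mapping.single w (1::'k)"
    assume IH: "lamF F (contraction f ?s) = contraction f (lamF F ?s)"
    have lhs: "lamF F (contraction f (ex ?x ?s)) = smul (f ?x) (lamF F ?s)
        - (contraction (F ?x) (lamF F (contraction f ?s)) + ex ?x (lamF F (contraction f ?s)))"
      by (simp only: contraction_ex f tlin_diff[OF tlin_lamF[OF F]] tlin_smul[OF tlin_lamF[OF F]]
          lamF_ex_contraction[OF F])
    have rhs: "contraction f (lamF F (ex ?x ?s)) = contraction f (contraction (F ?x) (lamF F ?s))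
        + (smul (f ?x) (lamF F ?s) - ex ?x (contraction f (lamF F ?s)))"
      by (simp only: lamF_ex_contraction[OF F] contraction_add contraction_ex f)
    have anticommute: "contraction f (contraction (F ?x) v) = - contraction (F ?x) (contraction f v)" for v
      by (rule contraction_anticommute[OF f bilin_lin_fun_right[OF F]])
    show "lamF F (contraction f (ex ?x ?s)) = contraction f (lamF F (ex ?x ?s))"
      unfolding lhs rhs IH anticommute by (simp add: algebra_simps)
  qed
  then show ?thesis
    by (rule fun_cong)
qed

lemma lamF_comp:
  fixes F G :: "('b, 'k::field) vec \<Rightarrow> ('b, 'k) vec \<Rightarrow> 'k"
  assumes F: "bilin F" and G: "bilin G"
  shows "lamF F \<circ> lamF G = lamF (\<lambda>x y. F x y + G x y)"
proof -
  let ?H = "\<lambda>x y. F x y + G x y"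
  have H: "bilin ?H"
    by (rule bilin_add[OF F G])
  have "(\<lambda>u. lamF F (lamF G u)) = lamF ?H"
  proof (rule tlin_eqI_word_induct)
    show "tlin (\<lambda>u. lamF F (lamF G u))"
      by (rule tlin_comp[OF tlin_lamF[OF F] tlin_lamF[OF G]])
    show "tlin (lamF ?H)"
      by (rule tlin_lamF[OF H])
    show "lamF F (lamF G tone) = lamF ?H tone"
      by (simp add: lamF_tone F G H)
  next
    fix b :: 'b and w :: "'b list"
    let ?x = "Poly_Mapping.single b (1::'k)" and ?s = "Poly_Mapping.single w (1::'k)"
    assume IH: "lamF F (lamF G ?s) = lamF ?H ?s"
    have lhs: "lamF F (lamF G (ex ?x ?s)) = contraction (G ?x) (lamF F (lamF G ?s))
        + (contraction (F ?x) (lamF F (lamF G ?s)) + ex ?x (lamF F (lamF G ?s)))"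
      by (simp only: lamF_ex_contraction[OF G] tlin_add[OF tlin_lamF[OF F]]
          lamF_contraction_commute[OF F bilin_lin_fun_right[OF G]] lamF_ex_contraction[OF F])
    have rhs: "lamF ?H (ex ?x ?s) = contraction (F ?x) (lamF ?H ?s)
        + contraction (G ?x) (lamF ?H ?s) + ex ?x (lamF ?H ?s)"
      by (simp only: lamF_ex_contraction[OF H] contraction_add_fun)
    show "lamF F (lamF G (ex ?x ?s)) = lamF ?H (ex ?x ?s)"
      unfolding lhs rhs IH by (simp add: algebra_simps)
  qed
  then show ?thesis
    by (simp add: comp_def)
qed

lemma lamF_zero: "lamF (\<lambda>x y. 0 :: 'k::field) = (id :: ('b, 'k) tens \<Rightarrow> ('b, 'k) tens)"
  by (rule tlin_eqI_word_induct)
    (simp_all add: tlin_lamF bilin_zero tlin_id lamF_tone lamF_ex_contraction contraction_zero_fun)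

lemma bij_lamF:
  assumes F: "bilin F"
  shows "bij (lamF F)"
proof (rule o_bij)
  show "lamF F \<circ> lamF (\<lambda>x y. - F x y) = id"
    using lamF_comp[OF F bilin_minus[OF F]] by (simp add: lamF_zero)
  show "lamF (\<lambda>x y. - F x y) \<circ> lamF F = id"
    using lamF_comp[OF bilin_minus[OF F] F] by (simp add: lamF_zero)
qed

section \<open>Parity\<close>

lemma lookup_alpha [simp]:
  "Poly_Mapping.lookup (alpha u) w = (-1) ^ length w * Poly_Mapping.lookup u w"
proof -
  have "finite {w. (-1) ^ length w * Poly_Mapping.lookup u w \<noteq> 0}"
    by (rule finite_subset[of _ "Poly_Mapping.keys u"]) (auto simp: in_keys_iff)
  then show ?thesis
    by (simp add: alpha_def)
qed

lemma alpha_add: "alpha (u + v) = alpha u + alpha v"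
  by (rule poly_mapping_eqI) (simp add: lookup_add algebra_simps)

lemma alpha_smul: "alpha (smul c u) = smul c (alpha u)"
  by (rule poly_mapping_eqI) (simp add: algebra_simps)

lemma alpha_diff: "alpha (u - v) = alpha u - alpha v"
  by (rule poly_mapping_eqI) (simp add: lookup_minus algebra_simps)

lemma alpha_minus: "alpha (- u) = - alpha u"
  by (rule poly_mapping_eqI) simp

lemma alpha_alpha [simp]: "alpha (alpha u) = u"
  by (rule poly_mapping_eqI) (simp flip: power_add mult.assoc add: mult_2[symmetric])

lemma alpha_tone [simp]: "alpha tone = tone"
  by (rule poly_mapping_eqI) (simp add: tone_def lookup_single when_def)

lemma alpha_single: "alpha (Poly_Mapping.single w c) = Poly_Mapping.single w ((-1) ^ length w * c)"
  by (rule poly_mapping_eqI) (simp add: lookup_single when_def)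

lemma tlin_alpha: "tlin alpha"
  by (simp add: tlin_def alpha_add alpha_smul)

lemma alpha_ex_single: "alpha (ex (Poly_Mapping.single b 1) u) = - ex (Poly_Mapping.single b 1) (alpha u)"
proof (induction u rule: poly_mapping_induct)
  case zero
  then show ?case by (simp add: tlin_zero[OF tlin_alpha])
next
  case (add u v)
  then show ?case by (simp add: ex_add alpha_add)
next
  case (single w c)
  then show ?case
    by (simp add: ex_single_single alpha_single single_uminus)
qed

lemma alpha_ex: "alpha (ex x u) = - ex x (alpha u)"
  unfolding ex_eq_sum[of x u] ex_eq_sum[of x "alpha u"]
  by (simp add: tlin_sum[OF tlin_alpha] alpha_smul alpha_ex_single smul_minus_right sum_negf)

text \<open>Conjugating a contraction by alpha and negating it yields another solution of the
  defining equations of that contraction.\<close>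

lemma alpha_contraction:
  assumes f: "lin_fun f"
  shows "alpha (contraction f v) = - contraction f (alpha v)"
proof -
  let ?h = "\<lambda>u. - alpha (contraction f (alpha u))"
  have "?h = contraction f"
  proof (rule contraction_unique[OF f])
    show "tlin ?h"
      by (rule tlin_minus[OF tlin_comp[OF tlin_alpha tlin_comp[OF tlin_contraction tlin_alpha]]])
    show "\<And>x u. ?h (ex x u) = smul (f x) u - ex x (?h u)"
      by (simp add: alpha_ex contraction_minus contraction_ex[OF f] alpha_minus alpha_diff
          alpha_smul ex_minus)
  qed (simp add: tlin_zero[OF tlin_alpha])
  then have "contraction f (alpha v) = - alpha (contraction f v)"
    by (metis alpha_alpha)
  then show ?thesis
    by simp
qed

lemma alpha_lamF_tword:
  assumes F: "bilin F"
  shows "alpha (lamF F (tword xs)) = smul ((-1) ^ length xs) (lamF F (tword xs))"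
proof (induction xs)
  case Nil
  then show ?case by (simp add: tword_Nil lamF_tone F)
next
  case (Cons x xs)
  then show ?case
    by (simp add: tword_Cons lamF_ex_contraction[OF F] alpha_add alpha_ex
        alpha_contraction[OF bilin_lin_fun_right[OF F]] contraction_smul ex_smul
        smul_minus_left smul_add_right)
qed

theorem mainTheorem3:
  fixes F :: "('b, 'k::field) vec \<Rightarrow> ('b, 'k) vec \<Rightarrow> 'k"
  assumes "bilin F"
  shows "lamF F tone = tone \<and> (\<forall>x. lamF F (incl x) = incl x)
    \<and> (\<forall>x u. lamF F (ex x u) = iF F x (lamF F u) + ex x (lamF F u))
    \<and> (\<forall>f. lin_fun f \<longrightarrow> lamF F \<circ> iop f = iop f \<circ> lamF F)
    \<and> (\<forall>G. bilin G \<longrightarrow> lamF F \<circ> lamF G = lamF (\<lambda>x y. F x y + G x y))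
    \<and> lamF (\<lambda>x y. 0 :: 'k) = (id :: ('b, 'k) tens \<Rightarrow> ('b, 'k) tens)
    \<and> bij (lamF F)
    \<and> (\<forall>xs. alpha (lamF F (tword xs)) = smul ((-1) ^ length xs) (lamF F (tword xs)))"
proof (intro conjI allI impI)
  show "lamF F tone = tone"
    by (rule lamF_tone[OF assms])
  show "lamF F (incl x) = incl x" for x
    by (rule lamF_incl[OF assms])
  show "lamF F (ex x u) = iF F x (lamF F u) + ex x (lamF F u)" for x u
    by (rule lamF_ex[OF assms])
  show "lamF F \<circ> iop f = iop f \<circ> lamF F" if "lin_fun f" for f
    using that by (simp add: fun_eq_iff iop_eq_contraction lamF_contraction_commute[OF assms])
  show "lamF F \<circ> lamF G = lamF (\<lambda>x y. F x y + G x y)" if "bilin G" for G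
    by (rule lamF_comp[OF assms that])
  show "lamF (\<lambda>x y. 0 :: 'k) = (id :: ('b, 'k) tens \<Rightarrow> ('b, 'k) tens)"
    by (fact lamF_zero)
  show "bij (lamF F)"
    by (rule bij_lamF[OF assms])
  show "alpha (lamF F (tword xs)) = smul ((-1) ^ length xs) (lamF F (tword xs))" for xs
    by (rule alpha_lamF_tword[OF assms])
qed

end
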